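(* Let $1\le k\le n$ and let $\mathcal{G}_{k-1}$ be a nearest-neighbor graph of a storage network with node set $\mathcal{N}$ and RTT function $\tau$. If $\mathcal{C}$ is a linear storage code that is admissible on $\mathcal{G}_{k-1}$, then for every node $i\in\mathcal{N}$, \[ L_{max}^{(i)}(\mathcal{C})=\lambda_{k-1}^{(i)}. \]
   Context: A storage network consists of $n$ nodes $\mathcal{N}=\{1,\dots,n\}$ and a round-trip-time (RTT) function $\tau:\mathcal{N}\times\mathcal{N}\to\mathbb{R}_{\ge 0}$ with $\tau(i,j)=\tau(j,i)$ and $\tau(i,i)=0$. There are $k\le n$ information files $W_1,\dots,W_k$, each consisting of $\alpha$ sub-packets in a finite field $\mathcal{F}$; node $i$ stores $X_i\in\mathcal{F}^\alpha$. A linear storage code $\mathcal{C}$ is given by a $(k\alpha\times n\alpha)$ matrix $G$ over $\mathcal{F}$ of rank $k\alpha$ with $\underline{X}^T=\underline{W}^T G$ (concatenated sub-packets). File $W_j$ is decodable from $S\subseteq\mathcal{N}$ if there is a function $\varphi$ with $\varphi((X_t)_{t\in S})=W_j$ for all choices of the files. The latency $l_j^{(i)}=\min\{L\ge 0: W_j$ decodable from $\{t:\tau(t,i)\le L\}\}$, and $L_{max}^{(i)}(\mathcal{C})=\max_{j\in[k]}l_j^{(i)}$. For node $i$, $\lambda_0^{(i)}\le\dots\le\lambda_{n-1}^{(i)}$ is the sorted list of $\{\tau(j,i):j\in\mathcal{N}\}$. A nearest-neighbor graph $\mathcal{G}_{k-1}$ is a directed graph on $\mathcal{N}$ in which each node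 $i$ has incoming edges from exactly $k-1$ other nodes whose RTTs to $i$ are the $k-1$ smallest values $\lambda_1^{(i)},\dots,\lambda_{k-1}^{(i)}$ (ties broken arbitrarily, so several such graphs may exist); these $k-1$ nodes are the neighbors of $i$. A code is admissible on a directed graph $\mathcal{D}$ on $\mathcal{N}$ if for every node $i$ and every $j\in[k]$, $W_j$ is decodable from $\{i\}$ together with the nodes having an edge into $i$ in $\mathcal{D}$. *)

theory Defs
  imports "Jordan_Normal_Form.DL_Rank"
begin

(* Conventions: nodes are 1..n, files are 1..k, sub-packets are indexed 0..<alpha.  The code is X^T = W^T G, i.e. X = G^T W, and
   node t stores coordinates (t-1)*alpha + a, a < alpha, of X. *)

definition file_of :: "nat \<Rightarrow> nat \<Rightarrow> 'f vec \<Rightarrow> 'f vec" where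
  "file_of \<alpha> j W = vec \<alpha> (\<lambda>a. W $ ((j - 1) * \<alpha> + a))"

definition stored :: "'f::field mat \<Rightarrow> nat \<Rightarrow> 'f vec \<Rightarrow> nat \<Rightarrow> 'f vec" where
  "stored G \<alpha> W t = vec \<alpha> (\<lambda>a. (transpose_mat G *\<^sub>v W) $ ((t - 1) * \<alpha> + a))"

definition decodable :: "'f::field mat \<Rightarrow> nat \<Rightarrow> nat \<Rightarrow> nat \<Rightarrow> nat set \<Rightarrow> bool" where
  "decodable G k \<alpha> j S \<longleftrightarrow>
     (\<exists>\<phi>. \<forall>W \<in> carrier_vec (k * \<alpha>). \<phi> (restrict (stored G \<alpha> W) S) = file_of \<alpha> j W)"

definition linear_storage_code :: "nat \<Rightarrow> nat \<Rightarrow> nat \<Rightarrow> 'f::field mat \<Rightarrow> bool" where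
  "linear_storage_code n k \<alpha> G \<longleftrightarrow>
     G \<in> carrier_mat (k * \<alpha>) (n * \<alpha>) \<and> vec_space.rank (k * \<alpha>) G = k * \<alpha>"

definition latency :: "nat \<Rightarrow> (nat \<Rightarrow> nat \<Rightarrow> real) \<Rightarrow> 'f::field mat \<Rightarrow> nat \<Rightarrow> nat \<Rightarrow> nat \<Rightarrow> nat \<Rightarrow> real" where
  "latency n \<tau> G k \<alpha> j i =
     (LEAST L. L \<ge> 0 \<and> decodable G k \<alpha> j {t \<in> {1..n}. \<tau> t i \<le> L})"

definition L_max :: "nat \<Rightarrow> (nat \<Rightarrow> nat \<Rightarrow> real) \<Rightarrow> 'f::field mat \<Rightarrow> nat \<Rightarrow> nat \<Rightarrow> nat \<Rightarrow> real" where
  "L_max n \<tau> G k \<alpha> i = Max ((\<lambda>j. latency n \<tau> G k \<alpha> j i) ` {1..k})"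

(* lambda_m^(i): m-th entry (0-based) of the sorted list of tau(j,i), j in N *)
definition rtt_sorted :: "nat \<Rightarrow> (nat \<Rightarrow> nat \<Rightarrow> real) \<Rightarrow> nat \<Rightarrow> real list" where
  "rtt_sorted n \<tau> i = sort (map (\<lambda>j. \<tau> j i) [1..<n+1])"

definition lam :: "nat \<Rightarrow> (nat \<Rightarrow> nat \<Rightarrow> real) \<Rightarrow> nat \<Rightarrow> nat \<Rightarrow> real" where
  "lam n \<tau> i m = rtt_sorted n \<tau> i ! m"

definition in_nbrs :: "(nat \<times> nat) set \<Rightarrow> nat \<Rightarrow> nat set" where
  "in_nbrs E i = {t. (t, i) \<in> E}"

definition nearest_neighbor_graph :: "nat \<Rightarrow> nat \<Rightarrow> (nat \<Rightarrow> nat \<Rightarrow> real) \<Rightarrow> (nat \<times> nat) set \<Rightarrow> bool" where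
  "nearest_neighbor_graph n k \<tau> E \<longleftrightarrow>
     E \<subseteq> {1..n} \<times> {1..n} \<and>
     (\<forall>i \<in> {1..n}. i \<notin> in_nbrs E i \<and> card (in_nbrs E i) = k - 1 \<and>
        image_mset (\<lambda>t. \<tau> t i) (mset_set (in_nbrs E i)) = mset (map (lam n \<tau> i) [1..<k]))"

definition admissible :: "nat \<Rightarrow> nat \<Rightarrow> nat \<Rightarrow> 'f::field mat \<Rightarrow> (nat \<times> nat) set \<Rightarrow> bool" where
  "admissible n k \<alpha> G D \<longleftrightarrow>
     (\<forall>i \<in> {1..n}. \<forall>j \<in> {1..k}. decodable G k \<alpha> j ({i} \<union> in_nbrs D i))"

end

theory Submission
  imports Defs "Berlekamp_Zassenhaus.Berlekamp_Type_Based"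
begin

(* Node i and its k - 1 nearest neighbours lie in the ball of radius lambda_(k-1) around i, so
   admissibility makes every file decodable within that radius and bounds every latency by
   lambda_(k-1).  Conversely, the open ball of radius lambda_(k-1) holds at most k - 1 nodes.  If
   every latency were smaller, all k files would be a function of the at most (k - 1) alpha symbols
   stored in that ball, and the |F|^(k alpha) possible contents of the files could not all be told
   apart. *)

lemma decodable_mono:
  assumes "decodable G k \<alpha> j S" and "S \<subseteq> T"
  shows "decodable G k \<alpha> j T"
proof -
  obtain \<phi> where \<phi>: "\<forall>W \<in> carrier_vec (k * \<alpha>). \<phi> (restrict (stored G \<alpha> W) S) = file_of \<alpha> j W"
    using assms(1) unfolding decodable_def by blast
  have "\<forall>W \<in> carrier_vec (k * \<alpha>). \<phi> (restrict (restrict (stored G \<alpha> W) T) S) = file_of \<alpha> j W"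
    using \<phi> assms(2) by (simp add: Int_absorb1)
  then show ?thesis
    unfolding decodable_def by (intro exI[of _ "\<lambda>X. \<phi> (restrict X S)"])
qed

lemma eq_vec_if_files_eq:
  assumes "0 < \<alpha>" and "W1 \<in> carrier_vec (k * \<alpha>)" and "W2 \<in> carrier_vec (k * \<alpha>)"
    and files: "\<forall>j \<in> {1..k}. file_of \<alpha> j W1 = file_of \<alpha> j W2"
  shows "W1 = W2"
proof (rule eq_vecI)
  show "dim_vec W1 = dim_vec W2"
    using assms(2,3) by simp
  fix x assume "x < dim_vec W2"
  then have "x div \<alpha> < k"
    using assms(3) by (simp add: less_mult_imp_div_less)
  then have "file_of \<alpha> (x div \<alpha> + 1) W1 $ (x mod \<alpha>) = file_of \<alpha> (x div \<alpha> + 1) W2 $ (x mod \<alpha>)"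
    using files by simp
  then show "W1 $ x = W2 $ x"
    using \<open>0 < \<alpha>\<close> by (simp add: file_of_def)
qed

lemma card_ge_if_all_files_decodable:
  fixes G :: "'f :: {field, finite} mat"
  assumes "finite S" and "0 < \<alpha>" and dec: "\<forall>j \<in> {1..k}. decodable G k \<alpha> j S"
  shows "k \<le> card S"
proof -
  obtain \<phi> where \<phi>: "\<And>j W. j \<in> {1..k} \<Longrightarrow> W \<in> carrier_vec (k * \<alpha>) \<Longrightarrow>
      \<phi> j (restrict (stored G \<alpha> W) S) = file_of \<alpha> j W"
    using dec unfolding decodable_def by metis
  define R where "R W = restrict (stored G \<alpha> W) S" for W
  have "inj_on R (carrier_vec (k * \<alpha>))"
    by (rule inj_onI, rule eq_vec_if_files_eq[OF \<open>0 < \<alpha>\<close>]) (auto simp: R_def simp flip: \<phi>)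
  moreover have "R ` carrier_vec (k * \<alpha>) \<subseteq> PiE S (\<lambda>_. carrier_vec \<alpha>)"
    unfolding R_def stored_def by auto
  moreover have "finite (PiE S (\<lambda>_. carrier_vec \<alpha> :: 'f vec set))"
    using \<open>finite S\<close> by (simp add: finite_PiE)
  ultimately have "card (carrier_vec (k * \<alpha>) :: 'f vec set) \<le> card (PiE S (\<lambda>_. carrier_vec \<alpha> :: 'f vec set))"
    by (rule card_inj_on_le)
  then have "CARD('f) ^ (k * \<alpha>) \<le> CARD('f) ^ (card S * \<alpha>)"
    using \<open>finite S\<close> by (simp add: card_PiE card_carrier_vec power_mult mult.commute)
  moreover have "1 < CARD('f)"
  proof -
    have "card {0 :: 'f, 1} \<le> CARD('f)"
      by (rule card_mono) auto
    then show ?thesis by simp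
  qed
  ultimately have "k * \<alpha> \<le> card S * \<alpha>"
    by (rule power_le_imp_le_exp[rotated])
  then show ?thesis
    using \<open>0 < \<alpha>\<close> by simp
qed

lemma sublevel_set_eq_at_value:
  fixes f :: "'a \<Rightarrow> real"
  assumes "finite A" and "0 \<le> L"
  shows "\<exists>v \<in> insert 0 (f ` A). v \<le> L \<and> {t \<in> A. f t \<le> v} = {t \<in> A. f t \<le> L}"
proof -
  define B where "B = {v \<in> insert 0 (f ` A). v \<le> L}"
  have "finite B" and "0 \<in> B"
    using assms unfolding B_def by auto
  then have "Max B \<in> B"
    using Max_in by blast
  moreover have "f t \<le> Max B" if "t \<in> A" and "f t \<le> L" for t
    using that \<open>finite B\<close> by (auto simp: B_def intro: Max_ge)
  ultimately have "{t \<in> A. f t \<le> Max B} = {t \<in> A. f t \<le> L}"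
    unfolding B_def by force
  then show ?thesis
    using \<open>Max B \<in> B\<close> unfolding B_def by blast
qed

(* The least threshold is attained: the sublevel set only changes at the finitely many
   values f t. *)
lemma Least_sublevel_threshold:
  fixes f :: "'a \<Rightarrow> real"
  assumes "finite A" and "\<forall>t \<in> A. 0 \<le> f t" and "0 \<le> c" and "D {t \<in> A. f t \<le> c}"
  shows "D {t \<in> A. f t \<le> (LEAST L. 0 \<le> L \<and> D {t \<in> A. f t \<le> L})}"
    and "(LEAST L. 0 \<le> L \<and> D {t \<in> A. f t \<le> L}) \<le> c"
proof -
  define P where "P L \<longleftrightarrow> 0 \<le> L \<and> D {t \<in> A. f t \<le> L}" for L
  define V where "V = {v \<in> insert 0 (f ` A). P v}"
  have below: "\<exists>v \<in> V. v \<le> L" if "P L" for L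
  proof -
    obtain v where v: "v \<in> insert 0 (f ` A)" "v \<le> L" "{t \<in> A. f t \<le> v} = {t \<in> A. f t \<le> L}"
      using sublevel_set_eq_at_value[OF \<open>finite A\<close>] \<open>P L\<close> unfolding P_def by blast
    then have "P v"
      using \<open>P L\<close> assms(2) unfolding P_def by auto
    then show ?thesis
      using v unfolding V_def by auto
  qed
  have "finite V"
    using \<open>finite A\<close> unfolding V_def by auto
  have "P c"
    using assms unfolding P_def by simp
  then have "V \<noteq> {}"
    using below by blast
  have "P (Min V)"
    using Min_in[OF \<open>finite V\<close> \<open>V \<noteq> {}\<close>] unfolding V_def by simp
  moreover have Min_le: "Min V \<le> L" if "P L" for L
    using below[OF that] Min_le[OF \<open>finite V\<close>] by force
  ultimately have "(LEAST L. P L) = Min V"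
    by (rule Least_equality)
  then show "D {t \<in> A. f t \<le> (LEAST L. 0 \<le> L \<and> D {t \<in> A. f t \<le> L})}"
    and "(LEAST L. 0 \<le> L \<and> D {t \<in> A. f t \<le> L}) \<le> c"
    using \<open>P (Min V)\<close> Min_le[OF \<open>P c\<close>] unfolding P_def by simp_all
qed

lemma
  assumes "\<forall>t \<in> {1..n}. 0 \<le> \<tau> t i" and "0 \<le> c"
    and "decodable G k \<alpha> j {t \<in> {1..n}. \<tau> t i \<le> c}"
  shows decodable_latency: "decodable G k \<alpha> j {t \<in> {1..n}. \<tau> t i \<le> latency n \<tau> G k \<alpha> j i}"
    and latency_le: "latency n \<tau> G k \<alpha> j i \<le> c"
  using Least_sublevel_threshold[of "{1..n}" "\<lambda>t. \<tau> t i" c "decodable G k \<alpha> j"] assms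
  unfolding latency_def by simp_all

lemma length_filter_less_nth_sorted:
  fixes xs :: "'a :: linorder list"
  assumes "sorted xs" and "m < length xs"
  shows "length (filter (\<lambda>x. x < xs ! m) xs) \<le> m"
proof -
  have "\<not> y < xs ! m" if "y \<in> set (drop m xs)" for y
  proof -
    from that obtain q where "q < length (drop m xs)" and "y = drop m xs ! q"
      unfolding in_set_conv_nth by blast
    then show ?thesis
      using sorted_nth_mono[OF \<open>sorted xs\<close>, of m "m + q"] by (simp add: not_less less_diff_conv)
  qed
  then have "filter (\<lambda>x. x < xs ! m) (drop m xs) = []"
    by (simp add: filter_empty_conv)
  then have "filter (\<lambda>x. x < xs ! m) xs = filter (\<lambda>x. x < xs ! m) (take m xs)"
    by (metis append_Nil2 append_take_drop_id filter_append)
  then show ?thesis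
    by (metis length_filter_le length_take min.bounded_iff)
qed

lemma set_rtt_sorted: "set (rtt_sorted n \<tau> i) = (\<lambda>t. \<tau> t i) ` {1..n}"
  by (auto simp: rtt_sorted_def atLeastLessThanSuc_atLeastAtMost)

lemma lam_nonneg:
  assumes "m < n" and "\<forall>t \<in> {1..n}. 0 \<le> \<tau> t i"
  shows "0 \<le> lam n \<tau> i m"
proof -
  have "lam n \<tau> i m \<in> set (rtt_sorted n \<tau> i)"
    unfolding lam_def using \<open>m < n\<close> by (intro nth_mem) (simp add: rtt_sorted_def)
  then show ?thesis
    using assms(2) by (auto simp: set_rtt_sorted)
qed

lemma lam_mono:
  assumes "m \<le> m'" and "m' < n"
  shows "lam n \<tau> i m \<le> lam n \<tau> i m'"
  using assms by (simp add: lam_def rtt_sorted_def sorted_nth_mono)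

lemma card_rtt_less_lam:
  assumes "m < n"
  shows "card {t \<in> {1..n}. \<tau> t i < lam n \<tau> i m} \<le> m"
proof -
  define c where "c = lam n \<tau> i m"
  have "{t \<in> {1..n}. \<tau> t i < c} = set (filter (\<lambda>t. \<tau> t i < c) [1..<n+1])"
    by auto
  then have "card {t \<in> {1..n}. \<tau> t i < c} = length (filter (\<lambda>t. \<tau> t i < c) [1..<n+1])"
    by (metis distinct_card distinct_filter distinct_upt)
  also have "\<dots> = length (filter (\<lambda>x. x < c) (rtt_sorted n \<tau> i))"
    by (simp add: rtt_sorted_def filter_sort filter_map comp_def)
  also have "\<dots> \<le> m"
    unfolding c_def lam_def using \<open>m < n\<close>
    by (intro length_filter_less_nth_sorted) (simp_all add: rtt_sorted_def)
  finally show ?thesis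
    unfolding c_def .
qed

lemma nearest_neighbor_graph_in_ball:
  assumes "nearest_neighbor_graph n k \<tau> E" and "i \<in> {1..n}" and "1 \<le> k" and "k \<le> n"
    and "\<tau> i i = 0" and "\<forall>t \<in> {1..n}. 0 \<le> \<tau> t i"
  shows "{i} \<union> in_nbrs E i \<subseteq> {t \<in> {1..n}. \<tau> t i \<le> lam n \<tau> i (k - 1)}"
proof -
  have E: "E \<subseteq> {1..n} \<times> {1..n}"
    and nbrs: "image_mset (\<lambda>t. \<tau> t i) (mset_set (in_nbrs E i)) = mset (map (lam n \<tau> i) [1..<k])"
    using assms(1,2) unfolding nearest_neighbor_graph_def by blast+
  have "in_nbrs E i \<subseteq> {1..n}"
    using E unfolding in_nbrs_def by blast
  moreover have "\<tau> t i \<le> lam n \<tau> i (k - 1)" if "t \<in> in_nbrs E i" for t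
  proof -
    have "finite (in_nbrs E i)"
      using \<open>in_nbrs E i \<subseteq> {1..n}\<close> by (rule finite_subset) simp
    then have "\<tau> t i \<in># image_mset (\<lambda>t. \<tau> t i) (mset_set (in_nbrs E i))"
      using that by simp
    then obtain m where "m < k" and "\<tau> t i = lam n \<tau> i m"
      unfolding nbrs by auto
    then show ?thesis
      using lam_mono[of m "k - 1" n \<tau> i] \<open>k \<le> n\<close> by simp
  qed
  moreover have "\<tau> i i \<le> lam n \<tau> i (k - 1)"
    using assms(3-6) by (simp add: lam_nonneg)
  ultimately show ?thesis
    using \<open>i \<in> {1..n}\<close> by blast
qed

lemma lam_le_some_latency:
  fixes G :: "'f :: {field, finite} mat"
  assumes "0 < \<alpha>" and "1 \<le> k" and "k \<le> n" and nonneg: "\<forall>t \<in> {1..n}. 0 \<le> \<tau> t i"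
    and dec: "\<forall>j \<in> {1..k}. decodable G k \<alpha> j {t \<in> {1..n}. \<tau> t i \<le> lam n \<tau> i (k - 1)}"
  shows "\<exists>j \<in> {1..k}. lam n \<tau> i (k - 1) \<le> latency n \<tau> G k \<alpha> j i"
proof (rule ccontr)
  define c where "c = lam n \<tau> i (k - 1)"
  assume "\<not> ?thesis"
  then have below: "latency n \<tau> G k \<alpha> j i < c" if "j \<in> {1..k}" for j
    using that unfolding c_def by force
  have "0 \<le> c"
    unfolding c_def using assms(2,3) nonneg by (simp add: lam_nonneg)
  have "decodable G k \<alpha> j {t \<in> {1..n}. \<tau> t i < c}" if "j \<in> {1..k}" for j
  proof -
    have "decodable G k \<alpha> j {t \<in> {1..n}. \<tau> t i \<le> latency n \<tau> G k \<alpha> j i}"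
      using decodable_latency[where \<tau> = \<tau> and i = i] nonneg \<open>0 \<le> c\<close> dec that
      unfolding c_def by blast
    then show ?thesis
      by (rule decodable_mono) (use below[OF that] in auto)
  qed
  then have "k \<le> card {t \<in> {1..n}. \<tau> t i < c}"
    using \<open>0 < \<alpha>\<close> by (intro card_ge_if_all_files_decodable[where G = G]) auto
  moreover have "card {t \<in> {1..n}. \<tau> t i < c} \<le> k - 1"
    unfolding c_def using assms(2,3) by (intro card_rtt_less_lam) simp
  ultimately show False
    using \<open>1 \<le> k\<close> by simp
qed

theorem proposition2:
  fixes n k \<alpha> :: nat and \<tau> :: "nat \<Rightarrow> nat \<Rightarrow> real"
    and G :: "'f :: {field, finite} mat" and E :: "(nat \<times> nat) set"
  assumes "1 \<le> k" and "k \<le> n" and "0 < \<alpha>"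
    and "\<forall>i \<in> {1..n}. \<forall>j \<in> {1..n}. \<tau> i j = \<tau> j i"
    and "\<forall>i \<in> {1..n}. \<tau> i i = 0"
    and "\<forall>i \<in> {1..n}. \<forall>j \<in> {1..n}. \<tau> i j \<ge> 0"
    and "nearest_neighbor_graph n k \<tau> E"
    and "linear_storage_code n k \<alpha> G"
    and "admissible n k \<alpha> G E"
  shows "\<forall>i \<in> {1..n}. L_max n \<tau> G k \<alpha> i = lam n \<tau> i (k - 1)"
proof
  fix i assume i: "i \<in> {1..n}"
  have nonneg: "\<forall>t \<in> {1..n}. 0 \<le> \<tau> t i"
    using assms(6) i by blast
  have radius_nonneg: "0 \<le> lam n \<tau> i (k - 1)"
    using assms(1,2) nonneg by (simp add: lam_nonneg)
  have ball: "{i} \<union> in_nbrs E i \<subseteq> {t \<in> {1..n}. \<tau> t i \<le> lam n \<tau> i (k - 1)}"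
    using nearest_neighbor_graph_in_ball[OF assms(7) i assms(1,2)] assms(5) i nonneg by blast
  have dec: "\<forall>j \<in> {1..k}. decodable G k \<alpha> j {t \<in> {1..n}. \<tau> t i \<le> lam n \<tau> i (k - 1)}"
    using assms(9) i decodable_mono[OF _ ball] unfolding admissible_def by blast
  have "\<forall>j \<in> {1..k}. latency n \<tau> G k \<alpha> j i \<le> lam n \<tau> i (k - 1)"
    using latency_le[where \<tau> = \<tau> and i = i] nonneg radius_nonneg dec by blast
  moreover have "\<exists>j \<in> {1..k}. lam n \<tau> i (k - 1) \<le> latency n \<tau> G k \<alpha> j i"
    using lam_le_some_latency[where \<tau> = \<tau> and i = i] assms(1-3) nonneg dec by blast
  ultimately show "L_max n \<tau> G k \<alpha> i = lam n \<tau> i (k - 1)"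
    unfolding L_max_def using \<open>1 \<le> k\<close> by (intro antisym) (auto simp: Max_ge_iff)
qed

end
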